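(* (I-optimality bounds.) In the setting of the context, every $I$-optimal design $\mathbf d^*$ with $\boldsymbol\Sigma^*=\mathbf M(\mathbf d^* )^{-1}=(c^*_{jk})$ satisfies, for all $j,k\in\{1,\dots,m\}$, $$|c^*_{jk}|\le\alpha\big[(\mathbf F\mathbf F')^{-1}_{jj}(\mathbf F\mathbf F')^{-1}_{kk}\big]^{1/2},$$ and for $j\ne k$, $$|c^*_{jk}|\le\frac{\alpha}{2}\lambda_{\max}\big(\mathbf E_{jk}'(\mathbf F\mathbf F')^{-1}\mathbf E_{jk}\big),$$ where $\alpha=\mathrm{tr}(\mathbf F'\mathbf M(\mathbf d_0)^{-1}\mathbf F)$.
   Context: $\mathbf f_1,\dots,\mathbf f_n\in\mathbb R^m$ span $\mathbb R^m$, $2\le m\le N\le n$, and $\mathbf F=(\mathbf f_1,\dots,\mathbf f_n)$ ($m\times n$). A (binary) design is $\mathbf d\in\{0,1\}^n$ with $\sum_i d_i=N$, with information matrix $\mathbf M(\mathbf d)=\sum_i d_i\mathbf f_i\mathbf f_i'$. An $I$-optimal design minimizes $\sum_{i=1}^n\mathbf f_i'\mathbf M(\mathbf d)^{-1}\mathbf f_i=\mathrm{tr}(\mathbf F'\mathbf M(\mathbf d)^{-1}\mathbf F)$ over designs with nonsingular $\mathbf M(\mathbf d)$. $\mathbf d_0$ is a design with nonsingular $\mathbf M(\mathbf d_0)$. $\mathbf E_{jk}=(\mathbf e_j,\mathbf e_k)$ with $\mathbf e_j$ the $j$-th unit vector; $\mathbf A_{jj}$ is the $(j,j)$ entry; $\lambda_{\max}$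 the largest eigenvalue. *)

theory Defs
  imports "HOL-Analysis.Analysis"
begin

text \<open>The model vectors f_1..f_n are the columns of F :: real^'n^'m
  (rows indexed by 'm, i.e. R^m; columns indexed by 'n, i.e. {1..n}).
  A design is a vector d in {0,1}^n with sum N.\<close>

definition is_design :: "nat \<Rightarrow> real^'n::finite \<Rightarrow> bool" where
  "is_design N d \<longleftrightarrow> (\<forall>i. d$i = 0 \<or> d$i = 1) \<and> (\<Sum>i\<in>UNIV. d$i) = real N"

definition info_mat :: "real^'n::finite^'m::finite \<Rightarrow> real^'n \<Rightarrow> real^'m^'m" where
  "info_mat F d = (\<Sum>i\<in>UNIV. d$i *\<^sub>R (\<chi> j k. (column i F)$j * (column i F)$k))"

definition I_crit :: "real^'n::finite^'m::finite \<Rightarrow> real^'n \<Rightarrow> real" where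
  "I_crit F d = trace (transpose F ** matrix_inv (info_mat F d) ** F)"

definition I_optimal :: "nat \<Rightarrow> real^'n::finite^'m::finite \<Rightarrow> real^'n \<Rightarrow> bool" where
  "I_optimal N F d \<longleftrightarrow> is_design N d \<and> invertible (info_mat F d) \<and>
     (\<forall>d'. is_design N d' \<and> invertible (info_mat F d') \<longrightarrow> I_crit F d \<le> I_crit F d')"

definition E_mat :: "'m::finite \<Rightarrow> 'm \<Rightarrow> real^2^'m" where
  "E_mat j k = (\<chi> r c. if c = 1 then (if r = j then 1 else 0) else (if r = k then 1 else 0))"

definition lambda_max :: "real^'a::finite^'a \<Rightarrow> real" where
  "lambda_max A = Max {l. \<exists>v. v \<noteq> 0 \<and> A *v v = l *\<^sub>R v}"

end

theory Submission
  imports Defs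
begin

text \<open>For every symmetric positive semidefinite S one has the Loewner bound
  S \<le> tr(F' S F) inv(F F'): writing x = F a with |a|^2 = x'inv(F F')x, the form x'Sx = \<Sigma>_i a_i f_i'Sx
  is controlled by two applications of Cauchy-Schwarz.  For an I-optimal design,
  tr(F' inv M(d*) F) \<le> \<alpha>, so inv M(d*) \<le> \<alpha> inv(F F').  The entry bounds follow from this
  Loewner bound by testing with e_j, e_k (and Cauchy-Schwarz for inv M(d*)), respectively with e_j \<plusminus> e_k,
  whose quadratic forms in inv(F F') are at most twice the largest eigenvalue of E_jk'inv(F F')E_jk.\<close>

subsection \<open>Symmetric and positive semidefinite matrices\<close>

lemma matrix_mul_matrix_inv:
  fixes A :: "'a::semiring_1^'n^'m"
  assumes "invertible A"
  shows "A ** matrix_inv A = mat 1" "matrix_inv A ** A = mat 1"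
  using someI_ex[OF assms[unfolded invertible_def]] unfolding matrix_inv_def by auto

lemma transpose_matrix_inv_symmetric:
  fixes A :: "'a::comm_semiring_1^'n^'n"
  assumes "invertible A" "transpose A = A"
  shows "transpose (matrix_inv A) = matrix_inv A"
proof -
  let ?S = "matrix_inv A"
  have "transpose ?S ** A = mat 1"
    by (metis assms(2) matrix_transpose_mul matrix_mul_matrix_inv(1)[OF assms(1)] transpose_mat)
  then have "transpose ?S = (transpose ?S ** A) ** ?S"
    by (metis matrix_mul_assoc matrix_mul_rid matrix_mul_matrix_inv(1)[OF assms(1)])
  also have "\<dots> = ?S" using \<open>transpose ?S ** A = mat 1\<close> by (simp add: matrix_mul_lid)
  finally show ?thesis .
qed

lemma inner_axis_matrix_vector_axis:
  fixes A :: "real^'n::finite^'n"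
  shows "axis j 1 \<bullet> (A *v axis k 1) = A$j$k"
  by (simp add: matrix_vector_mult_basis inner_axis' column_def)

lemma quadratic_form_axis_add:
  fixes A :: "real^'n::finite^'n"
  shows "(axis j 1 + c *\<^sub>R axis k 1) \<bullet> (A *v (axis j 1 + c *\<^sub>R axis k 1))
     = A$j$j + c * A$j$k + c * A$k$j + c^2 * A$k$k"
  by (simp add: matrix_vector_right_distrib scaleR_matrix_vector_assoc[symmetric]
      inner_add_left inner_add_right inner_axis_matrix_vector_axis power2_eq_square algebra_simps)

lemma symmetric_matrix_entry_swap:
  fixes A :: "'a^'n^'n"
  assumes "transpose A = A"
  shows "A$k$j = A$j$k"
  using assms by (metis transpose_def vec_lambda_beta)

lemma bilinear_form_symmetric:
  fixes S :: "real^'n::finite^'n"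
  assumes "transpose S = S"
  shows "v \<bullet> (S *v u) = u \<bullet> (S *v v)"
  by (metis assms dot_lmul_matrix inner_commute vector_transpose_matrix)

definition pos_semidef :: "real^'n::finite^'n \<Rightarrow> bool" where
  "pos_semidef A \<longleftrightarrow> (\<forall>x. 0 \<le> x \<bullet> (A *v x))"

lemma pos_semidef_matrix_inv:
  fixes M :: "real^'n::finite^'n"
  assumes "invertible M" "pos_semidef M"
  shows "pos_semidef (matrix_inv M)"
  unfolding pos_semidef_def
proof
  fix x
  have "M *v (matrix_inv M *v x) = x"
    by (simp add: matrix_vector_mul_assoc matrix_mul_matrix_inv(1)[OF assms(1)])
  then have "x \<bullet> (matrix_inv M *v x) = (matrix_inv M *v x) \<bullet> (M *v (matrix_inv M *v x))"
    by (metis inner_commute)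
  then show "0 \<le> x \<bullet> (matrix_inv M *v x)" using assms(2) unfolding pos_semidef_def by simp
qed

lemma quadratic_nonneg_discriminant:
  fixes a b c :: real
  assumes "\<And>t. 0 \<le> a + 2*t*b + t^2*c" "0 \<le> c"
  shows "b^2 \<le> a*c"
proof (cases "c = 0")
  case True
  show ?thesis
  proof (rule ccontr)
    assume "\<not> ?thesis"
    then have "b \<noteq> 0" using True by simp
    have "0 \<le> a + 2*(-(a+1)/(2*b))*b + (-(a+1)/(2*b))^2*c" using assms(1) by blast
    then show False using True \<open>b \<noteq> 0\<close> by (simp add: field_simps)
  qed
next
  case False
  then have c: "c > 0" using assms(2) by simp
  have "0 \<le> a + 2*(-b/c)*b + (-b/c)^2*c" using assms(1) by blast
  also have "\<dots> = a - b^2/c" using c by (simp add: field_simps power2_eq_square)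
  finally have "b^2/c \<le> a" by simp
  then show ?thesis using c by (simp add: field_simps mult.commute)
qed

lemma pos_semidef_Cauchy_Schwarz:
  fixes S :: "real^'n::finite^'n"
  assumes "transpose S = S" "pos_semidef S"
  shows "(u \<bullet> (S *v v))^2 \<le> (u \<bullet> (S *v u)) * (v \<bullet> (S *v v))"
proof (rule quadratic_nonneg_discriminant)
  fix t :: real
  have "(u + t *\<^sub>R v) \<bullet> (S *v (u + t *\<^sub>R v)) =
     u \<bullet> (S *v u) + t * (v \<bullet> (S *v u)) + t * (u \<bullet> (S *v v)) + t^2 * (v \<bullet> (S *v v))"
    by (simp add: matrix_vector_right_distrib scaleR_matrix_vector_assoc[symmetric]
        inner_add_left inner_add_right power2_eq_square algebra_simps)
  then show "0 \<le> u \<bullet> (S *v u) + 2 * t * (u \<bullet> (S *v v)) + t\<^sup>2 * (v \<bullet> (S *v v))"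
    using assms(2) bilinear_form_symmetric[OF assms(1), of v u]
    unfolding pos_semidef_def by (metis mult_2 distrib_right add.assoc)
next
  show "0 \<le> v \<bullet> (S *v v)" using assms(2) unfolding pos_semidef_def by simp
qed

lemma transpose_mult_sandwich_entry:
  fixes E :: "real^'a::finite^'n::finite" and B :: "real^'n^'n"
  shows "(transpose E ** B ** E) $ a $ b = column a E \<bullet> (B *v column b E)"
  by (simp add: matrix_matrix_mult_def transpose_def column_def inner_vec_def matrix_vector_mult_def
      sum_distrib_left sum_distrib_right mult_ac)
     (subst sum.swap, simp add: mult_ac)

lemma trace_transpose_mult_sandwich:
  fixes F :: "real^'n::finite^'m::finite"
  shows "trace (transpose F ** S ** F) = (\<Sum>i\<in>UNIV. column i F \<bullet> (S *v column i F))"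
  unfolding trace_def transpose_mult_sandwich_entry ..

lemma trace_transpose_mult_sandwich_nonneg:
  fixes F :: "real^'n::finite^'m::finite"
  assumes "pos_semidef S"
  shows "0 \<le> trace (transpose F ** S ** F)"
  using assms unfolding trace_transpose_mult_sandwich pos_semidef_def by (simp add: sum_nonneg)

lemma info_mat_entry: "info_mat F d $ j $ k = (\<Sum>i\<in>UNIV. d$i * (F$j$i * F$k$i))"
  unfolding info_mat_def by (simp add: sum_component column_def)

lemma transpose_info_mat: "transpose (info_mat F d) = info_mat F d"
  by (simp add: vec_eq_iff transpose_def info_mat_entry mult.commute)

lemma pos_semidef_info_mat:
  fixes F :: "real^'n::finite^'m::finite"
  assumes "\<And>i. 0 \<le> d$i"
  shows "pos_semidef (info_mat F d)"
  unfolding pos_semidef_def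
proof
  fix x :: "real^'m"
  have "x \<bullet> (info_mat F d *v x) = (\<Sum>i\<in>UNIV. d$i * (\<Sum>j\<in>UNIV. F$j$i * x$j)^2)"
    by (simp add: inner_vec_def matrix_vector_mult_def info_mat_entry sum_distrib_left
        sum_distrib_right power2_eq_square sum_product mult_ac)
       (subst (2) sum.swap, subst sum.swap, simp add: mult_ac)
  also have "\<dots> \<ge> 0" using assms by (intro sum_nonneg mult_nonneg_nonneg) auto
  finally show "0 \<le> x \<bullet> (info_mat F d *v x)" .
qed

subsection \<open>The largest eigenvalue of a symmetric 2x2 matrix\<close>

lemma matrix_vector_mult_2:
  fixes B :: "real^2^2"
  shows "(B *v v) $ 1 = B$1$1 * v$1 + B$1$2 * v$2" "(B *v v) $ 2 = B$2$1 * v$1 + B$2$2 * v$2"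
  by (simp_all add: matrix_vector_mult_def sum_2)

lemma eigenvalue_2x2_char_eq:
  fixes B :: "real^2^2"
  assumes "v \<noteq> 0" "B *v v = l *\<^sub>R v"
  shows "(B$1$1 - l) * (B$2$2 - l) = B$1$2 * B$2$1"
proof -
  have e1: "(B$1$1 - l) * v$1 + B$1$2 * v$2 = 0" and e2: "B$2$1 * v$1 + (B$2$2 - l) * v$2 = 0"
    using arg_cong[OF assms(2), of "\<lambda>w. w$1"] arg_cong[OF assms(2), of "\<lambda>w. w$2"]
    by (simp_all add: matrix_vector_mult_2 algebra_simps)
  have "((B$1$1 - l) * (B$2$2 - l) - B$1$2 * B$2$1) * v$1
      = (B$2$2 - l) * ((B$1$1 - l) * v$1 + B$1$2 * v$2) - B$1$2 * (B$2$1 * v$1 + (B$2$2 - l) * v$2)"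
    by (simp add: algebra_simps)
  moreover have "((B$1$1 - l) * (B$2$2 - l) - B$1$2 * B$2$1) * v$2
      = (B$1$1 - l) * (B$2$1 * v$1 + (B$2$2 - l) * v$2) - B$2$1 * ((B$1$1 - l) * v$1 + B$1$2 * v$2)"
    by (simp add: algebra_simps)
  moreover have "v$1 \<noteq> 0 \<or> v$2 \<noteq> 0" using assms(1) by (auto simp: vec_eq_iff forall_2)
  ultimately show ?thesis using e1 e2 by auto
qed

lemma eigenvector_symmetric_2x2_exists:
  fixes B :: "real^2^2"
  assumes sym: "B$2$1 = B$1$2"
  shows "\<exists>v. v \<noteq> 0 \<and> B *v v = ((B$1$1 + B$2$2 + sqrt ((B$1$1 - B$2$2)^2 + 4 * (B$1$2)^2)) / 2) *\<^sub>R v"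
proof -
  define a b c where "a = B$1$1" "b = B$1$2" "c = B$2$2"
  define r where "r = sqrt ((a-c)^2 + 4*b^2)"
  define l where "l = (a+c+r)/2"
  have "4 * ((l - a) * (l - c)) = r^2 - (a-c)^2"
    unfolding l_def by (simp add: power2_eq_square field_simps)
  then have key: "(l - a) * (l - c) = b^2" unfolding r_def by simp
  have entries: "B$1$1 = a" "B$1$2 = b" "B$2$1 = b" "B$2$2 = c" using sym by (simp_all add: a_b_c_def)
  consider "b \<noteq> 0" | "b = 0" "c \<le> a" | "b = 0" "a < c" by linarith
  then obtain v :: "real^2" where "v \<noteq> 0" "B *v v = l *\<^sub>R v"
  proof cases
    case 1
    let ?v = "vector [b, l - a] :: real^2"
    have "b * b + c * (l - a) = l * (l - a)"
      using key by (simp add: power2_eq_square algebra_simps)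
    then have "B *v ?v = l *\<^sub>R ?v"
      by (simp add: vec_eq_iff forall_2 matrix_vector_mult_2 entries algebra_simps)
    moreover have "?v \<noteq> 0" using 1 by (metis vector_2(1) zero_index)
    ultimately show ?thesis using that by blast
  next
    case 2
    then have "l = a" unfolding l_def r_def by simp
    then show ?thesis
      using 2 that[of "axis 1 1"] by (auto simp: vec_eq_iff forall_2 matrix_vector_mult_2 entries axis_def)
  next
    case 3
    then have "l = c" unfolding l_def r_def by simp
    then show ?thesis
      using 3 that[of "axis 2 1"] by (auto simp: vec_eq_iff forall_2 matrix_vector_mult_2 entries axis_def)
  qed
  then show ?thesis unfolding l_def r_def a_b_c_def by blast
qed

lemma lambda_max_symmetric_2x2:
  fixes B :: "real^2^2"
  assumes sym: "B$2$1 = B$1$2"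
  shows "lambda_max B = (B$1$1 + B$2$2 + sqrt ((B$1$1 - B$2$2)^2 + 4 * (B$1$2)^2)) / 2"
proof -
  define a b c where "a = B$1$1" "b = B$1$2" "c = B$2$2"
  define r where "r = sqrt ((a-c)^2 + 4*b^2)"
  define L where "L = {l. \<exists>v. v \<noteq> 0 \<and> B *v v = l *\<^sub>R v}"
  have r2: "r^2 = (a-c)^2 + 4*b^2" unfolding r_def by simp
  have "r \<ge> 0" unfolding r_def by simp
  have "L \<subseteq> {(a+c+r)/2, (a+c-r)/2}"
  proof
    fix l assume "l \<in> L"
    then have "(a - l) * (c - l) = b^2"
      using eigenvalue_2x2_char_eq[of _ B l] sym unfolding L_def a_b_c_def
      by (auto simp: power2_eq_square)
    then have "(2*l - a - c)^2 = r^2" unfolding r2 by (simp add: power2_eq_square algebra_simps)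
    then have "2*l - a - c = r \<or> 2*l - a - c = -r" by (simp add: power2_eq_iff)
    then show "l \<in> {(a+c+r)/2, (a+c-r)/2}" by auto
  qed
  moreover have "(a+c+r)/2 \<in> L"
    using eigenvector_symmetric_2x2_exists[OF sym] unfolding L_def r_def a_b_c_def by blast
  ultimately have "Max L = (a+c+r)/2"
    using \<open>r \<ge> 0\<close> by (intro Max_eqI) (auto intro: finite_subset)
  then show ?thesis unfolding lambda_max_def L_def[symmetric] r_def a_b_c_def .
qed

lemma column_E_mat: "column 1 (E_mat j k) = axis j 1" "column 2 (E_mat j k) = axis k 1"
  by (simp_all add: vec_eq_iff column_def E_mat_def axis_def)

lemma E_mat_sandwich_entries:
  fixes B :: "real^'m::finite^'m"
  shows "(transpose (E_mat j k) ** B ** E_mat j k) $ 1 $ 1 = B$j$j"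
    "(transpose (E_mat j k) ** B ** E_mat j k) $ 1 $ 2 = B$j$k"
    "(transpose (E_mat j k) ** B ** E_mat j k) $ 2 $ 1 = B$k$j"
    "(transpose (E_mat j k) ** B ** E_mat j k) $ 2 $ 2 = B$k$k"
  by (simp_all add: transpose_mult_sandwich_entry column_E_mat inner_axis_matrix_vector_axis)

lemma lambda_max_E_mat_sandwich_ge:
  fixes B :: "real^'m::finite^'m"
  assumes "transpose B = B"
  shows "B$j$j + B$k$k + 2 * \<bar>B$j$k\<bar> \<le> 2 * lambda_max (transpose (E_mat j k) ** B ** E_mat j k)"
proof -
  have "B$k$j = B$j$k" by (rule symmetric_matrix_entry_swap[OF assms])
  moreover have "2 * \<bar>B$j$k\<bar> \<le> sqrt ((B$j$j - B$k$k)^2 + 4 * (B$j$k)^2)"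
    by (rule real_le_rsqrt) (simp add: power2_eq_square)
  ultimately show ?thesis by (simp add: lambda_max_symmetric_2x2 E_mat_sandwich_entries)
qed

subsection \<open>The Gram matrix F F'\<close>

lemma invertible_Gram:
  fixes F :: "real^'n::finite^'m::finite"
  assumes "span (range (\<lambda>i. column i F)) = UNIV"
  shows "invertible (F ** transpose F)"
  unfolding invertible_left_inverse matrix_left_invertible_ker
proof (intro allI impI)
  fix x :: "real^'m" assume "(F ** transpose F) *v x = 0"
  then have "x \<bullet> (F *v (transpose F *v x)) = 0" by (simp add: matrix_vector_mul_assoc[symmetric])
  then have "(x v* F) \<bullet> (x v* F) = 0" by (simp add: dot_lmul_matrix[symmetric])
  then have xF: "x v* F = 0" by simp
  have "orthogonal x y" if y: "y \<in> range (\<lambda>i. column i F)" for y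
  proof -
    obtain i where "y = column i F" using y by auto
    moreover have "(x v* F) $ i = x \<bullet> column i F"
      by (simp add: vector_matrix_mult_def inner_vec_def column_def)
    ultimately show ?thesis using xF by (simp add: orthogonal_def)
  qed
  then have "orthogonal x x" using orthogonal_to_span[of x "range (\<lambda>i. column i F)" x] assms by auto
  then show "x = 0" by (simp add: orthogonal_def)
qed

lemma Gram_inv_factor:
  fixes F :: "real^'n::finite^'m::finite" and x :: "real^'m"
  assumes "invertible (F ** transpose F)"
  defines "a \<equiv> transpose F *v (matrix_inv (F ** transpose F) *v x)"
  shows "F *v a = x" "x \<bullet> (matrix_inv (F ** transpose F) *v x) = a \<bullet> a"
proof -
  let ?y = "matrix_inv (F ** transpose F) *v x"
  have "F *v a = (F ** transpose F ** matrix_inv (F ** transpose F)) *v x"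
    unfolding a_def by (simp only: matrix_vector_mul_assoc matrix_mul_assoc)
  then show x: "F *v a = x" by (simp add: matrix_mul_matrix_inv(1)[OF assms(1)])
  have "x \<bullet> ?y = (F *v a) \<bullet> ?y" by (simp only: x)
  also have "\<dots> = (?y v* F) \<bullet> a" by (metis dot_lmul_matrix inner_commute)
  also have "\<dots> = a \<bullet> a" unfolding a_def by (simp add: inner_commute)
  finally show "x \<bullet> ?y = a \<bullet> a" .
qed

lemma pos_semidef_Gram_inv:
  fixes F :: "real^'n::finite^'m::finite"
  assumes "invertible (F ** transpose F)"
  shows "pos_semidef (matrix_inv (F ** transpose F))"
  unfolding pos_semidef_def using Gram_inv_factor(2)[OF assms] by simp

lemma quadratic_form_le_trace_mult_Gram_inv:
  fixes F :: "real^'n::finite^'m::finite" and S :: "real^'m^'m"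
  assumes G: "invertible (F ** transpose F)" and S: "transpose S = S" "pos_semidef S"
  shows "x \<bullet> (S *v x) \<le> trace (transpose F ** S ** F) * (x \<bullet> (matrix_inv (F ** transpose F) *v x))"
proof -
  define a where "a = transpose F *v (matrix_inv (F ** transpose F) *v x)"
  define q where "q = x \<bullet> (matrix_inv (F ** transpose F) *v x)"
  define t where "t = trace (transpose F ** S ** F)"
  define s where "s = x \<bullet> (S *v x)"
  define b where "b i = column i F \<bullet> (S *v x)" for i
  have q: "q = (\<Sum>i\<in>UNIV. (a$i)^2)"
    using Gram_inv_factor(2)[OF G] unfolding q_def a_def by (simp add: inner_vec_def power2_eq_square)
  have s: "s = (\<Sum>i\<in>UNIV. a$i * b i)"
  proof -
    have "s = (\<Sum>i\<in>UNIV. a$i *s column i F) \<bullet> (S *v x)"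
      unfolding s_def using Gram_inv_factor(1)[OF G, of x] matrix_mult_sum[of F a]
      by (simp add: a_def)
    then show ?thesis by (simp add: inner_sum_left b_def scalar_mult_eq_scaleR)
  qed
  have "s^2 \<le> (\<Sum>i\<in>UNIV. (a$i)^2) * (\<Sum>i\<in>UNIV. (b i)^2)"
    unfolding s by (rule Cauchy_Schwarz_ineq_sum)
  also have "\<dots> \<le> q * (\<Sum>i\<in>UNIV. (column i F \<bullet> (S *v column i F)) * s)"
    unfolding q b_def s_def
    by (intro mult_left_mono sum_mono pos_semidef_Cauchy_Schwarz S) (simp add: sum_nonneg)
  also have "\<dots> = (t * q) * s"
    unfolding t_def trace_transpose_mult_sandwich by (simp add: sum_distrib_left sum_distrib_right mult_ac)
  finally have ss: "s * s \<le> (t * q) * s" by (simp add: power2_eq_square)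
  have "0 \<le> s" using S(2) unfolding s_def pos_semidef_def by simp
  moreover have "0 \<le> t * q"
    unfolding t_def q by (simp add: trace_transpose_mult_sandwich_nonneg[OF S(2)] sum_nonneg)
  ultimately have "s \<le> t * q" using ss by (cases "s = 0") simp_all
  then show ?thesis unfolding s_def t_def q_def .
qed

subsection \<open>Entries of matrices dominated in the Loewner order\<close>

lemma loewner_le_entry_abs_le_sqrt:
  fixes S T :: "real^'n::finite^'n"
  assumes S: "transpose S = S" "pos_semidef S" and le: "\<And>x. x \<bullet> (S *v x) \<le> x \<bullet> (T *v x)"
  shows "\<bar>S$j$k\<bar> \<le> sqrt (T$j$j * T$k$k)"
proof -
  have diag: "0 \<le> S$i$i" "S$i$i \<le> T$i$i" for i
    using S(2) le[of "axis i 1"] unfolding pos_semidef_def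
    by (auto simp: inner_axis_matrix_vector_axis dest: spec[of _ "axis i 1"])
  have "(S$j$k)^2 \<le> S$j$j * S$k$k"
    using pos_semidef_Cauchy_Schwarz[OF S, of "axis j 1" "axis k 1"]
    by (simp add: inner_axis_matrix_vector_axis)
  also have "\<dots> \<le> T$j$j * T$k$k" using diag by (intro mult_mono) (auto intro: order_trans)
  finally have "\<bar>S$j$k\<bar>^2 \<le> T$j$j * T$k$k" by simp
  then show ?thesis by (rule real_le_rsqrt)
qed

lemma loewner_le_entry_abs_le:
  fixes S T :: "real^'n::finite^'n"
  assumes S: "transpose S = S" "pos_semidef S" and T: "transpose T = T"
    and le: "\<And>x. x \<bullet> (S *v x) \<le> x \<bullet> (T *v x)"
  shows "4 * \<bar>S$j$k\<bar> \<le> T$j$j + T$k$k + 2 * \<bar>T$j$k\<bar>"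
proof -
  define u :: "real \<Rightarrow> real^'n" where "u c = axis j 1 + c *\<^sub>R axis k 1" for c
  have form: "u c \<bullet> (A *v u c) = A$j$j + 2 * c * A$j$k + c^2 * A$k$k"
    if "transpose A = A" for A :: "real^'n^'n" and c
    unfolding u_def quadratic_form_axis_add symmetric_matrix_entry_swap[OF that, where j = j and k = k]
    by simp
  have S_u: "0 \<le> u c \<bullet> (S *v u c)" for c using S(2) unfolding pos_semidef_def by simp
  have "0 \<le> S$j$j + 2 * S$j$k + S$k$k" "0 \<le> S$j$j - 2 * S$j$k + S$k$k"
    using form[OF S(1), of 1] form[OF S(1), of "-1"] S_u[of 1] S_u[of "-1"] by simp_all
  moreover have "S$j$j + 2 * S$j$k + S$k$k \<le> T$j$j + 2 * T$j$k + T$k$k"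
      "S$j$j - 2 * S$j$k + S$k$k \<le> T$j$j - 2 * T$j$k + T$k$k"
    using le[of "u 1"] le[of "u (-1)"] form[OF S(1)] form[OF T] by simp_all
  ultimately show ?thesis by linarith
qed

lemma inv_info_mat_symmetric_pos_semidef:
  fixes F :: "real^'n::finite^'m::finite"
  assumes "is_design N d" "invertible (info_mat F d)"
  shows "transpose (matrix_inv (info_mat F d)) = matrix_inv (info_mat F d)"
    "pos_semidef (matrix_inv (info_mat F d))"
proof -
  have "0 \<le> d$i" for i using assms(1) unfolding is_design_def by (metis order.refl zero_le_one)
  then show "transpose (matrix_inv (info_mat F d)) = matrix_inv (info_mat F d)"
    "pos_semidef (matrix_inv (info_mat F d))"
    using assms(2) by (auto intro!: transpose_matrix_inv_symmetric pos_semidef_matrix_inv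
        pos_semidef_info_mat simp: transpose_info_mat)
qed

lemma I_crit_nonneg:
  fixes F :: "real^'n::finite^'m::finite"
  assumes "is_design N d" "invertible (info_mat F d)"
  shows "0 \<le> I_crit F d"
  unfolding I_crit_def
  by (rule trace_transpose_mult_sandwich_nonneg[OF inv_info_mat_symmetric_pos_semidef(2)[OF assms]])

lemma I_optimal_inv_info_mat_le:
  fixes F :: "real^'n::finite^'m::finite"
  assumes span: "span (range (\<lambda>i. column i F)) = UNIV"
    and d0: "is_design N d0" "invertible (info_mat F d0)" and opt: "I_optimal N F dstar"
  shows "x \<bullet> (matrix_inv (info_mat F dstar) *v x)
    \<le> I_crit F d0 * (x \<bullet> (matrix_inv (F ** transpose F) *v x))"
proof -
  have G: "invertible (F ** transpose F)" by (rule invertible_Gram[OF span])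
  have des: "is_design N dstar" "invertible (info_mat F dstar)"
    and crit: "I_crit F dstar \<le> I_crit F d0"
    using opt d0 unfolding I_optimal_def by auto
  from crit have "trace (transpose F ** matrix_inv (info_mat F dstar) ** F) \<le> I_crit F d0"
    unfolding I_crit_def .
  then show ?thesis
    using quadratic_form_le_trace_mult_Gram_inv[OF G inv_info_mat_symmetric_pos_semidef[OF des], of x]
      pos_semidef_Gram_inv[OF G] unfolding pos_semidef_def
    by (meson mult_right_mono order_trans)
qed

theorem mainTheorem10:
  fixes F :: "real^'n::finite^'m::finite" and N :: nat and d0 dstar :: "real^'n"
  assumes span: "span (range (\<lambda>i. column i F)) = UNIV"
    and m2: "2 \<le> CARD('m)" and mN: "CARD('m) \<le> N" and Nn: "N \<le> CARD('n)"
    and d0: "is_design N d0" and d0inv: "invertible (info_mat F d0)"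
    and opt: "I_optimal N F dstar"
  shows "(\<forall>j k. \<bar>matrix_inv (info_mat F dstar) $ j $ k\<bar> \<le>
            I_crit F d0 * sqrt (matrix_inv (F ** transpose F) $ j $ j
                                * matrix_inv (F ** transpose F) $ k $ k))
       \<and> (\<forall>j k. j \<noteq> k \<longrightarrow> \<bar>matrix_inv (info_mat F dstar) $ j $ k\<bar> \<le>
            I_crit F d0 / 2 * lambda_max (transpose (E_mat j k) ** matrix_inv (F ** transpose F) ** E_mat j k))"
proof -
  define S where "S = matrix_inv (info_mat F dstar)"
  define Gi where "Gi = matrix_inv (F ** transpose F)"
  define \<alpha> where "\<alpha> = I_crit F d0"
  have G: "invertible (F ** transpose F)" by (rule invertible_Gram[OF span])
  have Gi: "transpose Gi = Gi"
    unfolding Gi_def using transpose_matrix_inv_symmetric[OF G] by (simp add: matrix_transpose_mul)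
  have "0 \<le> \<alpha>" unfolding \<alpha>_def by (rule I_crit_nonneg[OF d0 d0inv])
  have S: "transpose S = S" "pos_semidef S"
    using opt inv_info_mat_symmetric_pos_semidef unfolding S_def I_optimal_def by blast+
  have loewner: "x \<bullet> (S *v x) \<le> x \<bullet> ((\<alpha> *\<^sub>R Gi) *v x)" for x
    using I_optimal_inv_info_mat_le[OF span d0 d0inv opt, of x]
    unfolding S_def Gi_def \<alpha>_def by (simp add: scaleR_matrix_vector_assoc[symmetric])
  have "\<bar>S$j$k\<bar> \<le> \<alpha> * sqrt (Gi$j$j * Gi$k$k)" for j k
  proof -
    have "\<bar>S$j$k\<bar> \<le> sqrt (\<alpha>^2 * (Gi$j$j * Gi$k$k))"
      using loewner_le_entry_abs_le_sqrt[OF S loewner, of j k] by (simp add: power2_eq_square mult_ac)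
    then show ?thesis using \<open>0 \<le> \<alpha>\<close> by (simp add: real_sqrt_mult)
  qed
  moreover have "\<bar>S$j$k\<bar> \<le> \<alpha> / 2 * lambda_max (transpose (E_mat j k) ** Gi ** E_mat j k)" for j k
  proof -
    have "transpose (\<alpha> *\<^sub>R Gi) = \<alpha> *\<^sub>R Gi" using Gi(1) by (simp add: transpose_scalar)
    then have "4 * \<bar>S$j$k\<bar> \<le> \<alpha> * (Gi$j$j + Gi$k$k + 2 * \<bar>Gi$j$k\<bar>)"
      using loewner_le_entry_abs_le[OF S _ loewner, of j k] \<open>0 \<le> \<alpha>\<close>
      by (simp add: abs_mult algebra_simps)
    also have "\<dots> \<le> \<alpha> * (2 * lambda_max (transpose (E_mat j k) ** Gi ** E_mat j k))"
      using lambda_max_E_mat_sandwich_ge[OF Gi(1)] \<open>0 \<le> \<alpha>\<close> by (rule mult_left_mono)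
    finally show ?thesis by simp
  qed
  ultimately show ?thesis unfolding S_def Gi_def \<alpha>_def by blast
qed

end
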